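(* Let $G+H$ and $G'+H'$ be mixed graphs built from supply graphs $G,G'$ and demand digraphs $H,H'$, such that $G'+H'$ is a minor of $G+H$. Suppose there exist, for $(G',H')$, a measurable partition of the population by OD-pairs, an assignment of cost functions, and two strict equilibria inducing different flows on some arc. Then $(G,H)$ does not have the uniqueness property.
   Context: A supply graph is a finite undirected graph $G=(V,E)$ (parallel edges allowed), with directed version replacing each edge by two opposite arcs; a demand digraph is a simple digraph $H=(T,L)$ with $T\subseteq V$, arcs being OD-pairs; $G+H$ denotes the mixed graph $(V,E,L)$. A minor of a mixed graph is obtained by taking a sub-mixed-graph (subsets of vertices, edges and arcs) and contracting some of its edges (deleting an edge and identifying its endpoints). Routes for $(o,d)\in L$ are directed $(o,d)$-paths in the directed version of $G$. Users form a bounded interval with Lebesgue measure, partitioned measurably by OD-pair; a strategy profile assigns measurably to each user a route of his OD-pair; flows are measures of users using each arc; each user has nonnegative continuous strictly increasing arc cost functions (measurable in the user); an equilibrium is a profile where every user takes a minimal-cost route; it is strict if every user has a unique minimal-cost route. $(G,H)$ has the uniqueness property if for every measurable partition of users into OD-pairs and every such cost assignment, the flow on each arc is the same in all equilibria. *)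

theory Defs
  imports "HOL-Analysis.Analysis"
begin

text \<open>A mixed graph G+H is represented as (V, E, ends, L):
  V vertex set, E edge identifiers of the supply graph (parallel edges allowed),
  ends e = the two endpoints of edge e (orientation irrelevant),
  L the arcs (OD-pairs) of the demand digraph.\<close>

type_synonym ('v,'e) mixed_graph = "'v set \<times> 'e set \<times> ('e \<Rightarrow> 'v \<times> 'v) \<times> ('v \<times> 'v) set"

definition well_formed_mg :: "('v,'e) mixed_graph \<Rightarrow> bool" where
  "well_formed_mg M = (case M of (V, E, ends, L) \<Rightarrow>
     finite V \<and> finite E \<and> (\<forall>e\<in>E. fst (ends e) \<in> V \<and> snd (ends e) \<in> V)
     \<and> L \<subseteq> V \<times> V \<and> (\<forall>(s,t)\<in>L. s \<noteq> t))"

definition cedges :: "('e \<Rightarrow> 'v \<times> 'v) \<Rightarrow> 'e set \<Rightarrow> ('v \<times> 'v) set" where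
  "cedges ends C = {(u,w). \<exists>e\<in>C. ends e = (u,w) \<or> ends e = (w,u)}"

text \<open>M' is a minor of M: take a sub-mixed-graph (V0,E0,L0), contract the edges C \<subseteq> E0
  (vertices of the result = C-connected classes of V0, mapped by phi), and the result is
  isomorphic to M'.\<close>
definition is_minor :: "('w,'f) mixed_graph \<Rightarrow> ('v,'e) mixed_graph \<Rightarrow> bool" where
  "is_minor M' M = (case M' of (V', E', ends', L') \<Rightarrow> case M of (V, E, ends, L) \<Rightarrow>
     (\<exists>V0 E0 L0 C (\<phi>::'v \<Rightarrow> 'w) (\<beta>::'e \<Rightarrow> 'f).
        V0 \<subseteq> V \<and> E0 \<subseteq> E \<and> (\<forall>e\<in>E0. fst (ends e) \<in> V0 \<and> snd (ends e) \<in> V0)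
        \<and> L0 \<subseteq> L \<inter> (V0 \<times> V0) \<and> C \<subseteq> E0
        \<and> \<phi> ` V0 = V'
        \<and> (\<forall>u\<in>V0. \<forall>w\<in>V0. \<phi> u = \<phi> w \<longleftrightarrow> (u,w) \<in> (cedges ends C)\<^sup>*)
        \<and> bij_betw \<beta> (E0 - C) E'
        \<and> (\<forall>e\<in>E0 - C. ends' (\<beta> e) = (\<phi> (fst (ends e)), \<phi> (snd (ends e)))
                      \<or> ends' (\<beta> e) = (\<phi> (snd (ends e)), \<phi> (fst (ends e))))
        \<and> inj_on (map_prod \<phi> \<phi>) L0 \<and> map_prod \<phi> \<phi> ` L0 = L'))"

text \<open>Directed version: an arc is (e, True) traversing ends e forwards, or (e, False) backwards.\<close>
definition darcs :: "'e set \<Rightarrow> ('e \<times> bool) set" where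
  "darcs E = E \<times> UNIV"

definition dtail :: "('e \<Rightarrow> 'v \<times> 'v) \<Rightarrow> 'e \<times> bool \<Rightarrow> 'v" where
  "dtail ends a = (if snd a then fst (ends (fst a)) else snd (ends (fst a)))"

definition dhead :: "('e \<Rightarrow> 'v \<times> 'v) \<Rightarrow> 'e \<times> bool \<Rightarrow> 'v" where
  "dhead ends a = (if snd a then snd (ends (fst a)) else fst (ends (fst a)))"

definition is_route :: "('v,'e) mixed_graph \<Rightarrow> 'v \<times> 'v \<Rightarrow> ('e \<times> bool) list \<Rightarrow> bool" where
  "is_route M od P = (case M of (V, E, ends, L) \<Rightarrow>
     P \<noteq> [] \<and> set P \<subseteq> darcs E
     \<and> dtail ends (hd P) = fst od \<and> dhead ends (last P) = snd od
     \<and> (\<forall>i. Suc i < length P \<longrightarrow> dhead ends (P ! i) = dtail ends (P ! Suc i))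
     \<and> distinct (dtail ends (hd P) # map (dhead ends) P))"

text \<open>Users form the bounded interval I = {a..b} with Lebesgue measure.
  odp assigns each user his OD-pair (a measurable partition of I indexed by L);
  c x arc t is the cost of user x on an arc carrying flow t.\<close>
definition admissible ::
  "('v,'e) mixed_graph \<Rightarrow> real set \<Rightarrow> (real \<Rightarrow> 'v \<times> 'v) \<Rightarrow> (real \<Rightarrow> 'e \<times> bool \<Rightarrow> real \<Rightarrow> real) \<Rightarrow> bool" where
  "admissible M I odp c = (case M of (V, E, ends, L) \<Rightarrow>
     (\<forall>x\<in>I. odp x \<in> L) \<and> (\<forall>l\<in>L. {x\<in>I. odp x = l} \<in> sets lebesgue)
     \<and> (\<forall>x\<in>I. \<forall>a\<in>darcs E. continuous_on {0..} (c x a) \<and> strict_mono_on {0..} (c x a)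
                          \<and> (\<forall>t\<ge>0. c x a t \<ge> 0))
     \<and> (\<forall>a\<in>darcs E. \<forall>t\<ge>0. (\<lambda>x. c x a t) \<in> borel_measurable (restrict_space lebesgue I)))"

definition profile ::
  "('v,'e) mixed_graph \<Rightarrow> real set \<Rightarrow> (real \<Rightarrow> 'v \<times> 'v) \<Rightarrow> (real \<Rightarrow> ('e \<times> bool) list) \<Rightarrow> bool" where
  "profile M I odp \<sigma> = ((\<forall>x\<in>I. is_route M (odp x) (\<sigma> x))
      \<and> (\<forall>P. {x\<in>I. \<sigma> x = P} \<in> sets lebesgue))"

definition flow :: "real set \<Rightarrow> (real \<Rightarrow> ('e \<times> bool) list) \<Rightarrow> 'e \<times> bool \<Rightarrow> real" where
  "flow I \<sigma> a = measure lebesgue {x\<in>I. a \<in> set (\<sigma> x)}"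

definition route_cost ::
  "(real \<Rightarrow> 'e \<times> bool \<Rightarrow> real \<Rightarrow> real) \<Rightarrow> real \<Rightarrow> ('e \<times> bool \<Rightarrow> real) \<Rightarrow> ('e \<times> bool) list \<Rightarrow> real" where
  "route_cost c x f P = sum_list (map (\<lambda>a. c x a (f a)) P)"

definition equilibrium ::
  "('v,'e) mixed_graph \<Rightarrow> real set \<Rightarrow> (real \<Rightarrow> 'v \<times> 'v) \<Rightarrow> (real \<Rightarrow> 'e \<times> bool \<Rightarrow> real \<Rightarrow> real)
   \<Rightarrow> (real \<Rightarrow> ('e \<times> bool) list) \<Rightarrow> bool" where
  "equilibrium M I odp c \<sigma> = (profile M I odp \<sigma> \<and>
     (\<forall>x\<in>I. \<forall>P. is_route M (odp x) P \<longrightarrow>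
        route_cost c x (flow I \<sigma>) (\<sigma> x) \<le> route_cost c x (flow I \<sigma>) P))"

definition strict_equilibrium ::
  "('v,'e) mixed_graph \<Rightarrow> real set \<Rightarrow> (real \<Rightarrow> 'v \<times> 'v) \<Rightarrow> (real \<Rightarrow> 'e \<times> bool \<Rightarrow> real \<Rightarrow> real)
   \<Rightarrow> (real \<Rightarrow> ('e \<times> bool) list) \<Rightarrow> bool" where
  "strict_equilibrium M I odp c \<sigma> = (profile M I odp \<sigma> \<and>
     (\<forall>x\<in>I. \<forall>P. is_route M (odp x) P \<longrightarrow> P \<noteq> \<sigma> x \<longrightarrow>
        route_cost c x (flow I \<sigma>) (\<sigma> x) < route_cost c x (flow I \<sigma>) P))"

definition uniqueness_property :: "('v,'e) mixed_graph \<Rightarrow> real set \<Rightarrow> bool" where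
  "uniqueness_property M I = (case M of (V, E, ends, L) \<Rightarrow>
     (\<forall>odp c \<sigma>1 \<sigma>2. admissible M I odp c \<and> equilibrium M I odp c \<sigma>1 \<and> equilibrium M I odp c \<sigma>2
        \<longrightarrow> (\<forall>a\<in>darcs E. flow I \<sigma>1 a = flow I \<sigma>2 a)))"

end

theory Submission
  imports Defs "HOL-Library.Sublist" "HOL-Library.Nat_Bijection"
begin

(* Let G'+H' be obtained from the sub-mixed-graph (V0, E0, L0) of G+H by contracting the edge
   set C, and let s1, s2 be strict equilibria of G'+H' with different flows on some arc.
   We build a game on G+H with two equilibria having different flows:
   - each OD-pair of H' is pulled back to a preimage in L0 (od_lift);
   - each route R of G'+H' is replaced by a route of G+H inside E0 projecting onto R once the
     contracted arcs are dropped (a lift); a canonical lift is chosen by a flow-independent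
     tie-breaking rank that gives the contracted arcs the weights 2^k;
   - an uncontracted arc of E0 costs what its image costs plus a surcharge, a contracted arc
     gets a tiny strictly increasing cost dominated by its weight, and an arc outside E0 costs
     more than any simple route inside E0 (host_cost).
   The surcharge is below the gap, the least positive cost difference between routes in the
   strict equilibria. Strictness then makes a deviation whose projection differs from the
   user's route cost more (deviation_penalty), while among lifts of the same route the
   canonical one is cheapest. Hence the lifted profiles are equilibria, and every arc of
   E0 - C carries the flow of its image, so their flows differ. *)


section \<open>Walks and routes\<close>

fun walk :: "('e \<Rightarrow> 'v \<times> 'v) \<Rightarrow> 'v \<Rightarrow> ('e \<times> bool) list \<Rightarrow> 'v \<Rightarrow> bool" where
  "walk ends u [] v \<longleftrightarrow> u = v"
| "walk ends u (a # P) v \<longleftrightarrow> dtail ends a = u \<and> walk ends (dhead ends a) P v"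

lemma walk_append: "walk ends u P w \<Longrightarrow> walk ends w Q v \<Longrightarrow> walk ends u (P @ Q) v"
  by (induction P arbitrary: u) auto

lemma walk_drop:
  "walk ends u P v \<Longrightarrow> i < length P \<Longrightarrow> walk ends (dhead ends (P ! i)) (drop (Suc i) P) v"
proof (induction P arbitrary: u i)
  case (Cons a P)
  then show ?case by (cases i) auto
qed simp

lemma walk_iff_chain:
  assumes "P \<noteq> []"
  shows "walk ends u P v \<longleftrightarrow> dtail ends (hd P) = u \<and> dhead ends (last P) = v
           \<and> successively (\<lambda>a b. dhead ends a = dtail ends b) P"
  using assms
proof (induction P arbitrary: u rule: list_nonempty_induct)
  case (cons a P)
  have "walk ends u (a # P) v \<longleftrightarrow> dtail ends a = u \<and> walk ends (dhead ends a) P v"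
    by simp
  also have "\<dots> \<longleftrightarrow> dtail ends a = u \<and> dtail ends (hd P) = dhead ends a \<and> dhead ends (last P) = v
      \<and> successively (\<lambda>a b. dhead ends a = dtail ends b) P"
    using cons.IH by blast
  finally show ?case using cons.hyps by (auto simp: successively_Cons)
qed simp

lemma route_iff_walk:
  "is_route (V, E, ends, L) od P \<longleftrightarrow>
     P \<noteq> [] \<and> set P \<subseteq> darcs E \<and> walk ends (fst od) P (snd od)
     \<and> distinct (fst od # map (dhead ends) P)"
proof (cases "P = []")
  case False
  have walk_eq: "walk ends (fst od) P (snd od) \<longleftrightarrow> dtail ends (hd P) = fst od \<and> dhead ends (last P) = snd od
      \<and> (\<forall>i. Suc i < length P \<longrightarrow> dhead ends (P ! i) = dtail ends (P ! Suc i))"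
    by (simp add: walk_iff_chain[OF False] successively_conv_nth)
  show ?thesis unfolding is_route_def prod.case walk_eq by (rule iffI) force+
qed (simp add: is_route_def)

lemma set_subseq: "subseq xs ys \<Longrightarrow> set xs \<subseteq> set ys"
  by (auto elim: list_emb_set)

lemma walk_shortcut:
  "walk ends u P v \<Longrightarrow> \<exists>Q. subseq Q P \<and> walk ends u Q v \<and> distinct (u # map (dhead ends) Q)"
proof (induction P arbitrary: u)
  case Nil
  then show ?case by auto
next
  case (Cons a P)
  then have tail: "dtail ends a = u" and rest: "walk ends (dhead ends a) P v" by auto
  from Cons.IH[OF rest] obtain Q where Q: "subseq Q P" "walk ends (dhead ends a) Q v"
    "distinct (dhead ends a # map (dhead ends) Q)" by blast
  text \<open>The walk a # Q visits no vertex twice, except possibly its start u.\<close>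
  define W where "W = a # Q"
  have W: "subseq W (a # P)" "walk ends u W v" "distinct (map (dhead ends) W)"
    using Q tail by (auto simp: W_def)
  show ?case
  proof (cases "u \<in> set (map (dhead ends) W)")
    case False
    then show ?thesis using W by (intro exI[of _ W]) auto
  next
    case True
    text \<open>Cut the loop: keep only the part of W after its visit of u.\<close>
    then obtain j where j: "j < length W" "u = dhead ends (W ! j)"
      by (metis in_set_conv_nth length_map nth_map)
    have "subseq (drop (Suc j) W) (a # P)"
      using W(1) by (blast intro: subseq_order.trans suffix_imp_subseq suffix_drop)
    moreover have "walk ends u (drop (Suc j) W) v"
      using walk_drop[OF W(2) j(1)] j(2) by simp
    moreover have "distinct (u # map (dhead ends) (drop (Suc j) W))"
    proof -
      have "distinct (map (dhead ends) (drop j W))"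
        using W(3) by (simp add: drop_map[symmetric] distinct_drop)
      moreover have "map (dhead ends) (drop j W) = u # map (dhead ends) (drop (Suc j) W)"
        using j by (metis Cons_nth_drop_Suc list.simps(9))
      ultimately show ?thesis by simp
    qed
    ultimately show ?thesis by blast
  qed
qed

lemma darcs_iff [simp]: "a \<in> darcs X \<longleftrightarrow> fst a \<in> X"
  by (cases a) (auto simp: darcs_def)

lemma finite_darcs: "finite X \<Longrightarrow> finite (darcs X)"
  by (simp add: darcs_def)

lemma darcs_mono: "X \<subseteq> Y \<Longrightarrow> darcs X \<subseteq> darcs Y"
  by (auto simp: darcs_def)

definition short_arc_lists :: "'e set \<Rightarrow> ('e \<times> bool) list set" where
  "short_arc_lists E = {P. set P \<subseteq> darcs E \<and> length P \<le> card (darcs E)}"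

lemma finite_short_arc_lists: "finite E \<Longrightarrow> finite (short_arc_lists E)"
  unfolding short_arc_lists_def by (intro finite_lists_length_le finite_darcs)

lemma route_in_short_arc_lists:
  assumes "finite E" and "is_route (V, E, ends, L) od P"
  shows "P \<in> short_arc_lists E"
proof -
  from assms(2) have arcs: "set P \<subseteq> darcs E" and "distinct P"
    by (auto simp: route_iff_walk distinct_map)
  then have "length P = card (set P)" by (simp add: distinct_card)
  also have "\<dots> \<le> card (darcs E)" using arcs by (intro card_mono finite_darcs assms(1))
  finally show ?thesis using arcs by (simp add: short_arc_lists_def)
qed


lemma route_cost_Nil [simp]: "route_cost c x f [] = 0"
  and route_cost_Cons [simp]: "route_cost c x f (a # P) = c x a (f a) + route_cost c x f P"
  by (simp_all add: route_cost_def)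

lemma route_cost_distinct: "distinct P \<Longrightarrow> route_cost c x f P = (\<Sum>a\<in>set P. c x a (f a))"
  by (simp add: route_cost_def sum_list_distinct_conv_sum_set)

lemma route_cost_subseq:
  "subseq P Q \<Longrightarrow> (\<forall>a\<in>set Q. 0 \<le> c x a (f a)) \<Longrightarrow> route_cost c x f P \<le> route_cost c x f Q"
proof (induction rule: list_emb.induct)
  case (list_emb_Nil Q)
  then show ?case by (simp add: route_cost_def) (rule sum_list_nonneg, auto)
qed simp_all

lemma flow_nonneg: "0 \<le> flow I \<sigma> a"
  by (simp add: flow_def)

lemma flow_le_measure:
  assumes "I \<in> lmeasurable"
  shows "flow I \<sigma> a \<le> measure lebesgue I"
proof (cases "{x\<in>I. a \<in> set (\<sigma> x)} \<in> sets lebesgue")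
  case True
  then show ?thesis unfolding flow_def using assms by (intro measure_mono_fmeasurable) auto
next
  case False
  then show ?thesis by (simp add: flow_def measure_notin_sets)
qed


section \<open>Projecting and lifting routes along a minor\<close>

text \<open>Only the
  conditions needed to project and lift routes are kept.\<close>
locale minor_map =
  fixes E :: "'e set" and ends :: "'e \<Rightarrow> 'v \<times> 'v" and L :: "('v \<times> 'v) set"
    and V' :: "'w set" and E' :: "'f set" and ends' :: "'f \<Rightarrow> 'w \<times> 'w" and L' :: "('w \<times> 'w) set"
    and V0 :: "'v set" and E0 :: "'e set" and L0 :: "('v \<times> 'v) set" and C :: "'e set"
    and \<phi> :: "'v \<Rightarrow> 'w" and \<beta> :: "'e \<Rightarrow> 'f"
  assumes finite_E: "finite E"
    and wf': "well_formed_mg (V', E', ends', L')"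
    and E0_sub: "E0 \<subseteq> E"
    and ends_in_V0: "\<forall>e\<in>E0. fst (ends e) \<in> V0 \<and> snd (ends e) \<in> V0"
    and L0_sub: "L0 \<subseteq> L \<inter> (V0 \<times> V0)"
    and C_sub: "C \<subseteq> E0"
    and \<phi>_classes: "\<forall>u\<in>V0. \<forall>w\<in>V0. \<phi> u = \<phi> w \<longleftrightarrow> (u, w) \<in> (cedges ends C)\<^sup>*"
    and \<beta>_bij: "bij_betw \<beta> (E0 - C) E'"
    and \<beta>_ends: "\<forall>e\<in>E0 - C. ends' (\<beta> e) = (\<phi> (fst (ends e)), \<phi> (snd (ends e)))
                      \<or> ends' (\<beta> e) = (\<phi> (snd (ends e)), \<phi> (fst (ends e)))"
    and \<phi>_L0: "map_prod \<phi> \<phi> ` L0 = L'"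

lemma is_minor_minor_map:
  assumes "well_formed_mg (V, E, ends, L)" and "well_formed_mg (V', E', ends', L')"
    and "is_minor (V', E', ends', L') (V, E, ends, L)"
  obtains V0 E0 L0 C \<phi> \<beta> where "minor_map E ends L V' E' ends' L' V0 E0 L0 C \<phi> \<beta>"
  using assms unfolding is_minor_def minor_map_def well_formed_mg_def by auto

context minor_map
begin

abbreviation "M' \<equiv> (V', E', ends', L')"

lemma finite_E': "finite E'"
  using wf' by (simp add: well_formed_mg_def)

lemma finite_L': "finite L'"
  using wf' finite_subset[of L' "V' \<times> V'"] by (auto simp: well_formed_mg_def)

lemma finite_E0: "finite E0"
  using finite_E E0_sub by (rule finite_subset[rotated])

lemma finite_C: "finite C"
  using finite_E0 C_sub by (rule finite_subset[rotated])

definition arc_map :: "'e \<times> bool \<Rightarrow> 'f \<times> bool" where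
  "arc_map a = (\<beta> (fst a),
     if ends' (\<beta> (fst a)) = (\<phi> (fst (ends (fst a))), \<phi> (snd (ends (fst a)))) then snd a else \<not> snd a)"

definition proj :: "('e \<times> bool) list \<Rightarrow> ('f \<times> bool) list" where
  "proj Q = map arc_map (filter (\<lambda>a. fst a \<notin> C) Q)"

lemma arc_map_tail: "fst a \<in> E0 - C \<Longrightarrow> dtail ends' (arc_map a) = \<phi> (dtail ends a)"
  using \<beta>_ends[rule_format, of "fst a"] by (cases a) (auto simp: arc_map_def dtail_def)

lemma arc_map_head: "fst a \<in> E0 - C \<Longrightarrow> dhead ends' (arc_map a) = \<phi> (dhead ends a)"
  using \<beta>_ends[rule_format, of "fst a"] by (cases a) (auto simp: arc_map_def dhead_def)

lemma arc_map_in: "fst a \<in> E0 - C \<Longrightarrow> arc_map a \<in> darcs E'"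
  using \<beta>_bij by (auto simp: arc_map_def bij_betw_def)

lemma arc_map_inj: "inj_on arc_map (darcs (E0 - C))"
proof (rule inj_onI)
  fix a b assume "a \<in> darcs (E0 - C)" "b \<in> darcs (E0 - C)" and eq: "arc_map a = arc_map b"
  moreover from eq have "\<beta> (fst a) = \<beta> (fst b)" by (simp add: arc_map_def)
  ultimately have "fst a = fst b" using \<beta>_bij by (auto simp: bij_betw_def inj_on_def)
  with eq show "a = b" by (cases a, cases b) (auto simp: arc_map_def split: if_splits)
qed

lemma arc_map_surj:
  assumes "a' \<in> darcs E'"
  obtains a where "fst a \<in> E0 - C" and "arc_map a = a'"
proof -
  from assms \<beta>_bij obtain e where e: "e \<in> E0 - C" "\<beta> e = fst a'" by (auto simp: bij_betw_def)
  show thesis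
  proof (cases "ends' (\<beta> e) = (\<phi> (fst (ends e)), \<phi> (snd (ends e)))")
    case True
    then show thesis using e by (intro that[of "(e, snd a')"]) (cases a', auto simp: arc_map_def)
  next
    case False
    then show thesis using e by (intro that[of "(e, \<not> snd a')"]) (cases a', auto simp: arc_map_def)
  qed
qed

lemma arc_ends_in_V0: "fst a \<in> E0 \<Longrightarrow> dtail ends a \<in> V0 \<and> dhead ends a \<in> V0"
  using ends_in_V0 by (auto simp: dhead_def dtail_def)

lemma contracted_arc_class: "fst a \<in> C \<Longrightarrow> \<phi> (dtail ends a) = \<phi> (dhead ends a)"
proof -
  assume a: "fst a \<in> C"
  then have "(fst (ends (fst a)), snd (ends (fst a))) \<in> (cedges ends C)\<^sup>*"
    unfolding cedges_def by (intro r_into_rtrancl) auto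
  moreover have "fst (ends (fst a)) \<in> V0" "snd (ends (fst a)) \<in> V0" using a C_sub ends_in_V0 by auto
  ultimately have "\<phi> (fst (ends (fst a))) = \<phi> (snd (ends (fst a)))" using \<phi>_classes by blast
  then show ?thesis by (auto simp: dtail_def dhead_def)
qed

lemma walk_proj:
  "walk ends u Q v \<Longrightarrow> u \<in> V0 \<Longrightarrow> set Q \<subseteq> darcs E0 \<Longrightarrow> walk ends' (\<phi> u) (proj Q) (\<phi> v)"
proof (induction Q arbitrary: u)
  case Nil
  then show ?case by (simp add: proj_def)
next
  case (Cons a Q)
  then have tail: "dtail ends a = u" and a: "fst a \<in> E0"
    and IH: "walk ends' (\<phi> (dhead ends a)) (proj Q) (\<phi> v)"
    using arc_ends_in_V0 by auto
  show ?case
  proof (cases "fst a \<in> C")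
    case True
    then show ?thesis using IH contracted_arc_class[OF True] tail by (simp add: proj_def)
  next
    case False
    then show ?thesis using IH arc_map_tail[of a] arc_map_head[of a] tail a by (simp add: proj_def)
  qed
qed

lemma proj_arcs: "set Q \<subseteq> darcs E0 \<Longrightarrow> set (proj Q) \<subseteq> darcs E'"
  using arc_map_in by (auto simp: proj_def)

text \<open>An uncontracted arc is used by an arc list iff its image is used by the projection;
  this is what makes flows on E0 - C equal to the flows of their images.\<close>
lemma mem_proj_iff:
  assumes a: "fst a \<in> E0 - C" and Q: "set Q \<subseteq> darcs E0"
  shows "arc_map a \<in> set (proj Q) \<longleftrightarrow> a \<in> set Q"
proof
  assume "arc_map a \<in> set (proj Q)"
  then obtain b where b: "b \<in> set Q" "fst b \<notin> C" "arc_map b = arc_map a" by (auto simp: proj_def)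
  with a Q arc_map_inj have "b = a" by (auto simp: inj_on_def)
  with b show "a \<in> set Q" by simp
qed (use a in \<open>auto simp: proj_def\<close>)

lemma proj_contracted: "set S \<subseteq> darcs C \<Longrightarrow> proj S = []"
  by (auto simp: proj_def filter_empty_conv)

lemma walk_in_contracted_edges:
  "(u, w) \<in> (cedges ends C)\<^sup>* \<Longrightarrow> \<exists>S. walk ends u S w \<and> set S \<subseteq> darcs C"
proof (induction rule: rtrancl_induct)
  case base
  then show ?case by (intro exI[of _ "[]"]) auto
next
  case (step y z)
  then obtain S where S: "walk ends u S y" "set S \<subseteq> darcs C" by blast
  from step(2) obtain e where e: "e \<in> C" "ends e = (y, z) \<or> ends e = (z, y)"
    by (auto simp: cedges_def)
  then obtain a where a: "fst a = e" "dtail ends a = y" "dhead ends a = z"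
    by (metis dhead_def dtail_def fst_conv snd_conv)
  have "walk ends u (S @ [a]) z" using S a by (intro walk_append[of _ _ _ y]) auto
  then show ?case using S a e by (intro exI[of _ "S @ [a]"]) auto
qed

lemma contracted_walk_class:
  "walk ends u S w \<Longrightarrow> set S \<subseteq> darcs C \<Longrightarrow> u \<in> V0 \<Longrightarrow> \<forall>z\<in>set (u # map (dhead ends) S). \<phi> z = \<phi> u"
proof (induction S arbitrary: u)
  case (Cons a S)
  then have a: "fst a \<in> C" and "dtail ends a = u" and "walk ends (dhead ends a) S w" by auto
  moreover have "dhead ends a \<in> V0" using arc_ends_in_V0[of a] a C_sub by auto
  ultimately show ?case using Cons contracted_arc_class[OF a] by auto
qed simp

lemma class_path:
  assumes u: "u \<in> V0" and w: "w \<in> V0" and eq: "\<phi> u = \<phi> w"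
  obtains S where "walk ends u S w" "set S \<subseteq> darcs C" "distinct (u # map (dhead ends) S)"
    "\<forall>z\<in>set (u # map (dhead ends) S). \<phi> z = \<phi> u"
proof -
  have "(u, w) \<in> (cedges ends C)\<^sup>*" using u w eq \<phi>_classes by blast
  from walk_in_contracted_edges[OF this] obtain S0 where S0: "walk ends u S0 w" "set S0 \<subseteq> darcs C"
    by blast
  from walk_shortcut[OF S0(1)] obtain S where S: "subseq S S0" "walk ends u S w"
    "distinct (u # map (dhead ends) S)" by blast
  have "set S \<subseteq> darcs C" using set_subseq[OF S(1)] S0(2) by blast
  then show thesis using S contracted_walk_class[OF S(2) _ u] that by blast
qed

lemma distinct_append_classes:
  assumes "distinct xs" "distinct ys" "\<forall>z\<in>set xs. \<phi> z = p" "\<phi> ` set ys \<subseteq> Y" "p \<notin> Y"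
  shows "distinct (xs @ ys)"
  using assms by (auto simp: distinct_append)

lemma lift_path:
  "d \<in> V0 \<Longrightarrow> u \<in> V0 \<Longrightarrow> walk ends' (\<phi> u) R (\<phi> d) \<Longrightarrow> distinct (\<phi> u # map (dhead ends') R)
   \<Longrightarrow> set R \<subseteq> darcs E' \<Longrightarrow>
   \<exists>Q. walk ends u Q d \<and> set Q \<subseteq> darcs E0 \<and> proj Q = R \<and> distinct (u # map (dhead ends) Q)
     \<and> \<phi> ` set (u # map (dhead ends) Q) \<subseteq> set (\<phi> u # map (dhead ends') R)"
proof (induction R arbitrary: u)
  case Nil
  then obtain S where S: "walk ends u S d" "set S \<subseteq> darcs C" "distinct (u # map (dhead ends) S)"
    "\<forall>z\<in>set (u # map (dhead ends) S). \<phi> z = \<phi> u"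
    using class_path[of u d] by auto
  moreover have "set S \<subseteq> darcs E0" using S(2) darcs_mono[OF C_sub] by (rule subset_trans)
  ultimately show ?case using proj_contracted[OF S(2)] by (intro exI[of _ S]) auto
next
  case (Cons a' R)
  from Cons.prems(5) have "a' \<in> darcs E'" by auto
  then obtain a where a: "fst a \<in> E0 - C" "arc_map a = a'" by (rule arc_map_surj)
  have tail: "\<phi> (dtail ends a) = \<phi> u" and head: "\<phi> (dhead ends a) = dhead ends' a'"
    using Cons.prems(3) arc_map_tail[OF a(1)] arc_map_head[OF a(1)] a(2) by auto
  have V0: "dtail ends a \<in> V0" "dhead ends a \<in> V0" using arc_ends_in_V0[of a] a by auto
  text \<open>Walk inside the class of u to the tail of a, then take a, then lift the rest.\<close>
  obtain S where S: "walk ends u S (dtail ends a)" "set S \<subseteq> darcs C"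
    "distinct (u # map (dhead ends) S)" "\<forall>z\<in>set (u # map (dhead ends) S). \<phi> z = \<phi> u"
    using class_path[OF Cons.prems(2) V0(1) tail[symmetric]] by blast
  obtain Q where Q: "walk ends (dhead ends a) Q d" "set Q \<subseteq> darcs E0" "proj Q = R"
    "distinct (dhead ends a # map (dhead ends) Q)"
    "\<phi> ` set (dhead ends a # map (dhead ends) Q) \<subseteq> set (dhead ends' a' # map (dhead ends') R)"
    using Cons.IH[OF Cons.prems(1) V0(2)] Cons.prems head by auto
  have "walk ends u (S @ a # Q) d" using S(1) Q(1) by (intro walk_append) auto
  moreover have "set (S @ a # Q) \<subseteq> darcs E0"
    using subset_trans[OF S(2) darcs_mono[OF C_sub]] Q(2) a by auto
  moreover have "proj (S @ a # Q) = a' # R"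
    using proj_contracted[OF S(2)] a Q(3) by (simp add: proj_def)
  moreover have "distinct ((u # map (dhead ends) S) @ (dhead ends a # map (dhead ends) Q))"
    using distinct_append_classes[OF S(3) Q(4) S(4) Q(5)] Cons.prems(4) by simp
  moreover have "\<phi> ` set (u # map (dhead ends) (S @ a # Q)) \<subseteq> set (\<phi> u # map (dhead ends') (a' # R))"
    using S(4) Q(5) head by auto
  ultimately show ?case by (intro exI[of _ "S @ a # Q"]) auto
qed

lemma L0_V0: "(o', d) \<in> L0 \<Longrightarrow> o' \<in> V0 \<and> d \<in> V0"
  using L0_sub by auto

lemma L0_distinct_classes: "(o', d) \<in> L0 \<Longrightarrow> \<phi> o' \<noteq> \<phi> d"
  using \<phi>_L0 wf' by (force simp: well_formed_mg_def)

lemma route_lift: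
  assumes od: "(o', d) \<in> L0" and R: "is_route M' (\<phi> o', \<phi> d) R"
  obtains Q where "is_route (V, E, ends, L) (o', d) Q" "set Q \<subseteq> darcs E0" "proj Q = R"
proof -
  from R have "R \<noteq> []" "set R \<subseteq> darcs E'" "walk ends' (\<phi> o') R (\<phi> d)"
    "distinct (\<phi> o' # map (dhead ends') R)"
    by (auto simp: route_iff_walk)
  with lift_path L0_V0[OF od] obtain Q where Q: "walk ends o' Q d" "set Q \<subseteq> darcs E0"
    "proj Q = R" "distinct (o' # map (dhead ends) Q)" by metis
  moreover from Q(3) \<open>R \<noteq> []\<close> have "Q \<noteq> []" by (auto simp: proj_def)
  moreover have "set Q \<subseteq> darcs E" using Q(2) darcs_mono[OF E0_sub] by (rule subset_trans)
  ultimately show thesis by (intro that) (auto simp: route_iff_walk)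
qed

lemma route_proj:
  assumes od: "(o', d) \<in> L0" and Q: "is_route (V, E, ends, L) (o', d) Q" and QE0: "set Q \<subseteq> darcs E0"
  obtains P' where "is_route M' (\<phi> o', \<phi> d) P'" "subseq P' (proj Q)"
proof -
  have "walk ends' (\<phi> o') (proj Q) (\<phi> d)"
    using Q QE0 L0_V0[OF od] by (auto simp: route_iff_walk intro: walk_proj)
  from walk_shortcut[OF this] obtain P' where P': "subseq P' (proj Q)"
    "walk ends' (\<phi> o') P' (\<phi> d)" "distinct (\<phi> o' # map (dhead ends') P')" by blast
  moreover have "P' \<noteq> []" using P'(2) L0_distinct_classes[OF od] by auto
  moreover have "set P' \<subseteq> darcs E'" using set_subseq[OF P'(1)] proj_arcs[OF QE0] by blast
  ultimately show thesis by (intro that) (auto simp: route_iff_walk)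
qed

end


section \<open>Lifting two strict equilibria from a minor\<close>

locale lifted_game = minor_map E ends L V' E' ends' L' V0 E0 L0 C \<phi> \<beta>
  for E :: "'e set" and ends :: "'e \<Rightarrow> 'v \<times> 'v" and L and V' :: "'w set" and E' :: "'f set"
    and ends' L' V0 E0 L0 C \<phi> \<beta> +
  fixes V :: "'v set" and lo hi :: real
    and odp' :: "real \<Rightarrow> 'w \<times> 'w" and c' :: "real \<Rightarrow> 'f \<times> bool \<Rightarrow> real \<Rightarrow> real"
    and s1 s2 :: "real \<Rightarrow> ('f \<times> bool) list"
  assumes admissible': "admissible M' {lo..hi} odp' c'"
    and strict_s1: "strict_equilibrium M' {lo..hi} odp' c' s1"
    and strict_s2: "strict_equilibrium M' {lo..hi} odp' c' s2"
begin

abbreviation "M \<equiv> (V, E, ends, L)"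
abbreviation "pop \<equiv> {lo..hi}"
abbreviation "pop_space \<equiv> restrict_space lebesgue pop"

definition mass :: real where "mass = measure lebesgue pop"

lemma mass_nonneg: "0 \<le> mass"
  by (simp add: mass_def)

lemma flow_le_mass: "flow pop \<sigma> a \<le> mass"
  unfolding mass_def using lmeasurable_cbox[of lo hi] by (intro flow_le_measure) simp

lemma flow_bounds: "0 \<le> flow pop \<sigma> a \<and> flow pop \<sigma> a \<le> mass"
  by (simp add: flow_nonneg flow_le_mass)

lemma strict_equilibria: "\<sigma> \<in> {s1, s2} \<Longrightarrow> strict_equilibrium M' pop odp' c' \<sigma>"
  using strict_s1 strict_s2 by auto

lemma user_route: "x \<in> pop \<Longrightarrow> \<sigma> \<in> {s1, s2} \<Longrightarrow> odp' x \<in> L' \<and> is_route M' (odp' x) (\<sigma> x)"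
  using admissible' strict_equilibria[of \<sigma>]
  by (auto simp: admissible_def strict_equilibrium_def profile_def)

lemma cost'_props:
  "x \<in> pop \<Longrightarrow> a \<in> darcs E' \<Longrightarrow>
    continuous_on {0..} (c' x a) \<and> strict_mono_on {0..} (c' x a) \<and> (\<forall>t\<ge>0. 0 \<le> c' x a t)"
  using admissible' by (auto simp: admissible_def)

lemma cost'_measurable: "a \<in> darcs E' \<Longrightarrow> 0 \<le> t \<Longrightarrow> (\<lambda>x. c' x a t) \<in> borel_measurable pop_space"
  using admissible' by (auto simp: admissible_def)

lemma cost'_flow_nonneg: "x \<in> pop \<Longrightarrow> set S \<subseteq> darcs E' \<Longrightarrow> \<forall>a\<in>set S. 0 \<le> c' x a (flow pop \<sigma> a)"
  using cost'_props flow_nonneg by blast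

lemma od_measurable: "l' \<in> L' \<Longrightarrow> {x \<in> pop. odp' x = l'} \<in> sets lebesgue"
  using admissible' by (auto simp: admissible_def)

lemma route_cost'_measurable:
  "set P \<subseteq> darcs E' \<Longrightarrow> (\<forall>a. 0 \<le> f a) \<Longrightarrow> (\<lambda>x. route_cost c' x f P) \<in> borel_measurable pop_space"
  by (induction P) (auto intro!: borel_measurable_add cost'_measurable)


text \<open>The gap of user x is the least positive cost difference between two short arc lists,
  for either of the two flows (or 1). Strictness makes every deviation from s1 or s2 cost
  at least the gap.\<close>
definition gap_index :: "(('f \<times> bool) list \<times> ('f \<times> bool) list \<times> (real \<Rightarrow> ('f \<times> bool) list)) set" where
  "gap_index = short_arc_lists E' \<times> short_arc_lists E' \<times> {s1, s2}"

definition pair_gap :: "('f \<times> bool) list \<times> ('f \<times> bool) list \<times> (real \<Rightarrow> ('f \<times> bool) list) \<Rightarrow> real \<Rightarrow> real" where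
  "pair_gap i x = (case i of (P, Q, \<sigma>) \<Rightarrow>
     if route_cost c' x (flow pop \<sigma>) Q < route_cost c' x (flow pop \<sigma>) P
     then route_cost c' x (flow pop \<sigma>) P - route_cost c' x (flow pop \<sigma>) Q else 1)"

definition gap :: "real \<Rightarrow> real" where
  "gap x = Min ((\<lambda>i. pair_gap i x) ` gap_index)"

lemma finite_gap_index: "finite gap_index"
  using finite_short_arc_lists[OF finite_E'] by (simp add: gap_index_def)

lemma gap_pos: "0 < gap x"
proof -
  have "([], [], s1) \<in> gap_index" by (simp add: gap_index_def short_arc_lists_def)
  then have "gap_index \<noteq> {}" by blast
  then show ?thesis unfolding gap_def using finite_gap_index
    by (subst Min_gr_iff) (auto simp: pair_gap_def split: prod.split)
qed

lemma gap_le_difference: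
  assumes "\<sigma> \<in> {s1, s2}" "P \<in> short_arc_lists E'" "Q \<in> short_arc_lists E'"
    and less: "route_cost c' x (flow pop \<sigma>) Q < route_cost c' x (flow pop \<sigma>) P"
  shows "route_cost c' x (flow pop \<sigma>) Q + gap x \<le> route_cost c' x (flow pop \<sigma>) P"
proof -
  have "(P, Q, \<sigma>) \<in> gap_index" using assms by (auto simp: gap_index_def)
  then have "gap x \<le> pair_gap (P, Q, \<sigma>) x" unfolding gap_def using finite_gap_index by simp
  then show ?thesis using less by (simp add: pair_gap_def)
qed

lemma gap_measurable: "gap \<in> borel_measurable pop_space"
proof -
  have "pair_gap i \<in> borel_measurable pop_space" if i_mem: "i \<in> gap_index" for i
  proof -
    obtain P Q \<sigma> where i: "i = (P, Q, \<sigma>)" "P \<in> short_arc_lists E'" "Q \<in> short_arc_lists E'"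
      using i_mem by (cases i) (auto simp: gap_index_def)
    have "(\<lambda>x. route_cost c' x (flow pop \<sigma>) R) \<in> borel_measurable pop_space"
      if "R \<in> short_arc_lists E'" for R
      using that by (intro route_cost'_measurable) (auto simp: short_arc_lists_def flow_nonneg)
    with i have "(\<lambda>x. route_cost c' x (flow pop \<sigma>) P) \<in> borel_measurable pop_space"
      "(\<lambda>x. route_cost c' x (flow pop \<sigma>) Q) \<in> borel_measurable pop_space" by auto
    then show ?thesis unfolding i(1) pair_gap_def[abs_def] prod.case by measurable
  qed
  then show ?thesis unfolding gap_def[abs_def] by (intro borel_measurable_Min finite_gap_index)
qed

lemma deviation_penalty:
  fixes \<theta> :: real
  assumes \<sigma>: "\<sigma> \<in> {s1, s2}" and x: "x \<in> pop"
    and \<theta>: "0 < \<theta>" "\<theta> * (real (card (darcs E')) + 1) \<le> gap x"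
    and P': "is_route M' (odp' x) P'" and sub: "subseq P' S" and S: "set S \<subseteq> darcs E'"
    and other: "S \<noteq> \<sigma> x"
  shows "route_cost c' x (flow pop \<sigma>) (\<sigma> x) + \<theta> * (length (\<sigma> x) + 1 / 2)
           \<le> route_cost c' x (flow pop \<sigma>) S + \<theta> * length S"
proof -
  let ?rc = "route_cost c' x (flow pop \<sigma>)"
  have R: "is_route M' (odp' x) (\<sigma> x)" using user_route[OF x \<sigma>] by simp
  have short: "\<sigma> x \<in> short_arc_lists E'" "P' \<in> short_arc_lists E'"
    using route_in_short_arc_lists[OF finite_E'] R P' by blast+
  have "?rc P' \<le> ?rc S"
    using sub cost'_flow_nonneg[OF x S] by (rule route_cost_subseq)
  show ?thesis
  proof (cases "P' = \<sigma> x")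
    case True
    text \<open>Then S strictly contains the route, so it is at least one arc longer.\<close>
    with sub other have "length (\<sigma> x) \<noteq> length S" using subseq_same_length by blast
    moreover have "length (\<sigma> x) \<le> length S" using sub True list_emb_length by blast
    ultimately have "\<theta> * (length (\<sigma> x) + 1 / 2) \<le> \<theta> * length S"
      using \<theta>(1) by (intro mult_left_mono) auto
    then show ?thesis using \<open>?rc P' \<le> ?rc S\<close> True by simp
  next
    case False
    text \<open>Then S contains a route that is strictly worse than the equilibrium route.\<close>
    with \<sigma> x P' have "?rc (\<sigma> x) < ?rc P'"
      using strict_equilibria[OF \<sigma>] by (auto simp: strict_equilibrium_def)
    then have "?rc (\<sigma> x) + gap x \<le> ?rc P'" by (intro gap_le_difference[OF \<sigma> short(2,1)])
    moreover have "\<theta> * (length (\<sigma> x) + 1 / 2) \<le> \<theta> * (real (card (darcs E')) + 1)"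
      using short(1) \<theta>(1) by (intro mult_left_mono) (auto simp: short_arc_lists_def)
    ultimately show ?thesis using \<open>?rc P' \<le> ?rc S\<close> \<theta> by (smt (verit) mult_nonneg_nonneg of_nat_0_le_iff)
  qed
qed


definition od_lift :: "'w \<times> 'w \<Rightarrow> 'v \<times> 'v" where
  "od_lift l' = inv_into L0 (map_prod \<phi> \<phi>) l'"

definition host_odp :: "real \<Rightarrow> 'v \<times> 'v" where
  "host_odp x = od_lift (odp' x)"

definition lifts :: "'v \<times> 'v \<Rightarrow> ('f \<times> bool) list \<Rightarrow> ('e \<times> bool) list set" where
  "lifts l R = {Q. is_route M l Q \<and> set Q \<subseteq> darcs E0 \<and> proj Q = R}"

text \<open>The tie-breaking rank of an arc list encodes the set of contracted arcs it uses, via an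
  injective numbering of the contracted arcs; it does not depend on any flow.\<close>
definition tie_index :: "'e \<times> bool \<Rightarrow> nat" where
  "tie_index = (SOME f. inj_on f (darcs C))"

definition tie_rank :: "('e \<times> bool) list \<Rightarrow> nat" where
  "tie_rank Q = (\<Sum>a\<in>set Q \<inter> darcs C. 2 ^ tie_index a)"

definition canonical_lift :: "'v \<times> 'v \<Rightarrow> ('f \<times> bool) list \<Rightarrow> ('e \<times> bool) list" where
  "canonical_lift l R = (SOME Q. Q \<in> lifts l R \<and> (\<forall>Q'\<in>lifts l R. tie_rank Q \<le> tie_rank Q'))"

definition host_profile :: "(real \<Rightarrow> ('f \<times> bool) list) \<Rightarrow> real \<Rightarrow> ('e \<times> bool) list" where
  "host_profile \<sigma> x = canonical_lift (host_odp x) (\<sigma> x)"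

lemma tie_index_inj: "inj_on tie_index (darcs C)"
proof -
  obtain f :: "'e \<times> bool \<Rightarrow> nat" where "inj_on f (darcs C)"
    using finite_imp_inj_to_nat_seg[OF finite_darcs[OF finite_C]] by blast
  then show ?thesis unfolding tie_index_def by (rule someI[where x = f])
qed

text \<open>Equal ranks mean equal sets of contracted arcs (uniqueness of binary expansions).\<close>
lemma tie_rank_eq: "tie_rank Q1 = tie_rank Q2 \<Longrightarrow> set Q1 \<inter> darcs C = set Q2 \<inter> darcs C"
proof -
  assume eq: "tie_rank Q1 = tie_rank Q2"
  have encode: "tie_rank Q = set_encode (tie_index ` (set Q \<inter> darcs C))" for Q
  proof -
    have "inj_on tie_index (set Q \<inter> darcs C)" using tie_index_inj by (rule inj_on_subset) auto
    then show ?thesis unfolding tie_rank_def set_encode_def by (simp add: sum.reindex)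
  qed
  have "tie_index ` (set Q1 \<inter> darcs C) = tie_index ` (set Q2 \<inter> darcs C)"
    using eq unfolding encode by (subst (asm) set_encode_eq) auto
  then show ?thesis using inj_on_image_eq_iff[OF tie_index_inj] by blast
qed

lemma od_lift: "l' \<in> L' \<Longrightarrow> od_lift l' \<in> L0 \<and> map_prod \<phi> \<phi> (od_lift l') = l'"
  using \<phi>_L0 by (auto simp: od_lift_def intro: inv_into_into f_inv_into_f)

lemma canonical_lift:
  assumes l: "l \<in> L0" and R: "is_route M' (map_prod \<phi> \<phi> l) R"
  shows "canonical_lift l R \<in> lifts l R \<and> (\<forall>Q'\<in>lifts l R. tie_rank (canonical_lift l R) \<le> tie_rank Q')"
proof -
  obtain o' d where od: "l = (o', d)" by (cases l)
  with l R obtain Q where "Q \<in> lifts l R" by (auto simp: lifts_def elim: route_lift)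
  then have "\<exists>Q. Q \<in> lifts l R \<and> (\<forall>Q'. Q' \<in> lifts l R \<longrightarrow> tie_rank Q \<le> tie_rank Q')"
    by (rule ex_has_least_nat)
  then have "\<exists>Q. Q \<in> lifts l R \<and> (\<forall>Q'\<in>lifts l R. tie_rank Q \<le> tie_rank Q')" by blast
  then show ?thesis unfolding canonical_lift_def by (rule someI_ex)
qed

lemma host_profile:
  assumes "x \<in> pop" and "\<sigma> \<in> {s1, s2}"
  shows "host_odp x \<in> L0" and "map_prod \<phi> \<phi> (host_odp x) = odp' x"
    and "host_profile \<sigma> x \<in> lifts (host_odp x) (\<sigma> x)"
    and "\<forall>Q'\<in>lifts (host_odp x) (\<sigma> x). tie_rank (host_profile \<sigma> x) \<le> tie_rank Q'"
proof -
  from user_route[OF assms] have "odp' x \<in> L'" and R: "is_route M' (odp' x) (\<sigma> x)" by auto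
  then show "host_odp x \<in> L0" and l: "map_prod \<phi> \<phi> (host_odp x) = odp' x"
    using od_lift by (auto simp: host_odp_def)
  show "host_profile \<sigma> x \<in> lifts (host_odp x) (\<sigma> x)"
    and "\<forall>Q'\<in>lifts (host_odp x) (\<sigma> x). tie_rank (host_profile \<sigma> x) \<le> tie_rank Q'"
    using canonical_lift[OF \<open>host_odp x \<in> L0\<close>] R l by (auto simp: host_profile_def)
qed

lemma host_flow:
  assumes \<sigma>: "\<sigma> \<in> {s1, s2}" and a: "fst a \<in> E0 - C"
  shows "flow pop (host_profile \<sigma>) a = flow pop \<sigma> (arc_map a)"
proof -
  have "a \<in> set (host_profile \<sigma> x) \<longleftrightarrow> arc_map a \<in> set (\<sigma> x)" if x: "x \<in> pop" for x
    using host_profile(3)[OF x \<sigma>] mem_proj_iff[OF a, of "host_profile \<sigma> x"] by (auto simp: lifts_def)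
  then show ?thesis unfolding flow_def by (metis (mono_tags, lifting) mem_Collect_eq)
qed


text \<open>The surcharge per uncontracted arc, small enough for deviation_penalty.\<close>
definition surcharge :: "real \<Rightarrow> real" where
  "surcharge x = gap x / (real (card (darcs E')) + 1)"

definition tie_weight :: "'e \<times> bool \<Rightarrow> real" where
  "tie_weight a = 2 ^ tie_index a"

definition total_tie_weight :: real where
  "total_tie_weight = (\<Sum>a\<in>darcs C. tie_weight a)"

text \<open>The flow-dependent part of the cost of a contracted arc is below the weight unit.\<close>
definition slope :: real where
  "slope = 1 / ((real (card (darcs C)) + 1) * (mass + 1))"

text \<open>All contracted arcs of a route together cost less than half a surcharge.\<close>
definition scale :: "real \<Rightarrow> real" where
  "scale x = surcharge x / (2 * (total_tie_weight + 1))"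

definition inner_cost :: "real \<Rightarrow> 'e \<times> bool \<Rightarrow> real \<Rightarrow> real" where
  "inner_cost x a t = (if fst a \<in> C then scale x * (tie_weight a + slope * t)
                       else c' x (arc_map a) t + surcharge x)"

text \<open>An arc outside E0 costs more than any route inside E0 can cost.\<close>
definition exit_cost :: "real \<Rightarrow> real" where
  "exit_cost x = 1 + (\<Sum>a\<in>darcs E0. inner_cost x a mass)"

definition host_cost :: "real \<Rightarrow> 'e \<times> bool \<Rightarrow> real \<Rightarrow> real" where
  "host_cost x a t = (if fst a \<in> E0 then inner_cost x a t else exit_cost x + t)"

lemma surcharge_pos: "0 < surcharge x"
  using gap_pos[of x] by (simp add: surcharge_def)

lemma surcharge_gap: "surcharge x * (real (card (darcs E')) + 1) \<le> gap x"
  by (simp add: surcharge_def)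

lemma tie_weight_pos: "0 < tie_weight a"
  by (simp add: tie_weight_def)

lemma total_tie_weight_nonneg: "0 \<le> total_tie_weight"
  unfolding total_tie_weight_def by (intro sum_nonneg) (simp add: tie_weight_def)

lemma slope_pos: "0 < slope"
  using mass_nonneg by (simp add: slope_def)

lemma scale_pos: "0 < scale x"
  using surcharge_pos[of x] total_tie_weight_nonneg by (simp add: scale_def)

lemma inner_cost_nonneg: "x \<in> pop \<Longrightarrow> fst a \<in> E0 \<Longrightarrow> 0 \<le> t \<Longrightarrow> 0 \<le> inner_cost x a t"
  using scale_pos[of x] tie_weight_pos[of a] slope_pos surcharge_pos[of x]
    cost'_props[OF _ arc_map_in, of x a]
  by (auto simp: inner_cost_def)

lemma inner_cost_strict_mono: "x \<in> pop \<Longrightarrow> fst a \<in> E0 \<Longrightarrow> strict_mono_on {0..} (inner_cost x a)"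
proof (intro strict_mono_onI)
  fix r t :: real assume x: "x \<in> pop" and a: "fst a \<in> E0" and rt: "r \<in> {0..}" "t \<in> {0..}" "r < t"
  show "inner_cost x a r < inner_cost x a t"
  proof (cases "fst a \<in> C")
    case False
    then have "strict_mono_on {0..} (c' x (arc_map a))" using cost'_props[OF x arc_map_in] a by auto
    then show ?thesis using rt False by (simp add: inner_cost_def strict_mono_onD)
  qed (use rt scale_pos[of x] slope_pos in \<open>simp add: inner_cost_def\<close>)
qed

lemma host_cost_nonneg: "x \<in> pop \<Longrightarrow> 0 \<le> t \<Longrightarrow> 0 \<le> host_cost x a t"
proof -
  assume x: "x \<in> pop" and t: "0 \<le> t"
  have "0 \<le> (\<Sum>a\<in>darcs E0. inner_cost x a mass)"
    using inner_cost_nonneg[OF x _ mass_nonneg] by (intro sum_nonneg) simp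
  then have "0 \<le> exit_cost x" by (simp add: exit_cost_def)
  then show ?thesis using inner_cost_nonneg[OF x _ t] t by (simp add: host_cost_def)
qed

lemma host_cost_strict_mono: "x \<in> pop \<Longrightarrow> strict_mono_on {0..} (host_cost x a)"
  using inner_cost_strict_mono[of x a] by (auto simp: host_cost_def strict_mono_on_def)

lemma host_cost_continuous: "x \<in> pop \<Longrightarrow> continuous_on {0..} (host_cost x a)"
proof -
  assume x: "x \<in> pop"
  have "continuous_on {0..} (c' x (arc_map a))" if "fst a \<in> E0 - C"
    using cost'_props[OF x arc_map_in[OF that]] by blast
  then show ?thesis unfolding host_cost_def inner_cost_def
    by (cases "fst a \<in> E0"; cases "fst a \<in> C") (auto intro!: continuous_intros)
qed

lemma surcharge_measurable: "surcharge \<in> borel_measurable pop_space"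
  unfolding surcharge_def[abs_def] using gap_measurable by measurable

lemma inner_cost_measurable:
  "fst a \<in> E0 \<Longrightarrow> 0 \<le> t \<Longrightarrow> (\<lambda>x. inner_cost x a t) \<in> borel_measurable pop_space"
  using surcharge_measurable cost'_measurable[OF arc_map_in, of a t] unfolding inner_cost_def scale_def
  by (cases "fst a \<in> C") (auto intro!: borel_measurable_times borel_measurable_divide borel_measurable_add)

lemma host_cost_measurable: "0 \<le> t \<Longrightarrow> (\<lambda>x. host_cost x a t) \<in> borel_measurable pop_space"
proof -
  assume t: "0 \<le> t"
  have "exit_cost \<in> borel_measurable pop_space"
    unfolding exit_cost_def[abs_def] using inner_cost_measurable mass_nonneg
    by (intro borel_measurable_add borel_measurable_sum) auto
  then show ?thesis using inner_cost_measurable[OF _ t]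
    by (cases "fst a \<in> E0") (auto simp: host_cost_def intro!: borel_measurable_add)
qed


definition contraction_cost :: "real \<Rightarrow> ('e \<times> bool \<Rightarrow> real) \<Rightarrow> ('e \<times> bool) list \<Rightarrow> real" where
  "contraction_cost x f Q =
     sum_list (map (\<lambda>a. scale x * (tie_weight a + slope * f a)) (filter (\<lambda>a. fst a \<in> C) Q))"

lemma host_route_cost:
  assumes flows: "\<And>a. fst a \<in> E0 - C \<Longrightarrow> f a = g (arc_map a)" and "set Q \<subseteq> darcs E0"
  shows "route_cost host_cost x f Q
           = route_cost c' x g (proj Q) + surcharge x * length (proj Q) + contraction_cost x f Q"
  using assms(2)
proof (induction Q)
  case Nil
  then show ?case by (simp add: proj_def contraction_cost_def)
next
  case (Cons a Q)
  then have "fst a \<in> E0" by simp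
  with Cons flows[of a] show ?case
    by (cases "fst a \<in> C") (auto simp: proj_def contraction_cost_def host_cost_def inner_cost_def algebra_simps)
qed

lemma tie_rank_real: "real (tie_rank Q) = (\<Sum>a\<in>set Q \<inter> darcs C. tie_weight a)"
  by (simp add: tie_rank_def tie_weight_def)

lemma tie_rank_le_total: "real (tie_rank Q) \<le> total_tie_weight"
  unfolding tie_rank_real total_tie_weight_def
  by (rule sum_mono2[OF finite_darcs[OF finite_C]]) (auto simp: tie_weight_def)

lemma contraction_cost_eq:
  "distinct Q \<Longrightarrow>
    contraction_cost x f Q = scale x * (real (tie_rank Q) + slope * (\<Sum>a\<in>set Q \<inter> darcs C. f a))"
proof -
  assume "distinct Q"
  moreover have "set (filter (\<lambda>a. fst a \<in> C) Q) = set Q \<inter> darcs C" by auto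
  ultimately have "contraction_cost x f Q = (\<Sum>a\<in>set Q \<inter> darcs C. scale x * (tie_weight a + slope * f a))"
    unfolding contraction_cost_def by (simp add: sum_list_distinct_conv_sum_set)
  then show ?thesis
    by (simp add: tie_rank_real sum.distrib sum_distrib_left distrib_left mult.assoc)
qed

lemma slope_sum_bounds:
  assumes f: "\<forall>a. 0 \<le> f a \<and> f a \<le> mass"
  shows "0 \<le> slope * (\<Sum>a\<in>S \<inter> darcs C. f a)" and "slope * (\<Sum>a\<in>S \<inter> darcs C. f a) < 1"
proof -
  let ?k = "real (card (darcs C))"
  have "0 \<le> (\<Sum>a\<in>S \<inter> darcs C. f a)" using f by (intro sum_nonneg) blast
  then show "0 \<le> slope * (\<Sum>a\<in>S \<inter> darcs C. f a)" using slope_pos by simp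
  have "card (S \<inter> darcs C) \<le> card (darcs C)" by (intro card_mono finite_darcs finite_C) auto
  then have "(\<Sum>a\<in>S \<inter> darcs C. f a) \<le> ?k * mass"
    using f mass_nonneg sum_bounded_above[of "S \<inter> darcs C" f mass]
    by (smt (verit) mult_right_mono of_nat_mono)
  also have "\<dots> < (?k + 1) * (mass + 1)" using mass_nonneg by (simp add: algebra_simps)
  finally show "slope * (\<Sum>a\<in>S \<inter> darcs C. f a) < 1"
    using mass_nonneg by (simp add: slope_def divide_less_eq add_pos_nonneg)
qed

lemma contraction_cost_bounds:
  assumes "distinct Q" and "\<forall>a. 0 \<le> f a \<and> f a \<le> mass"
  shows "scale x * real (tie_rank Q) \<le> contraction_cost x f Q"
    and "contraction_cost x f Q < scale x * (real (tie_rank Q) + 1)"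
  using slope_sum_bounds[OF assms(2), of "set Q"] scale_pos[of x]
  unfolding contraction_cost_eq[OF assms(1)] by (simp_all add: distrib_left)

lemma contraction_cost_small:
  assumes "distinct Q" and "\<forall>a. 0 \<le> f a \<and> f a \<le> mass"
  shows "contraction_cost x f Q < surcharge x / 2"
proof -
  have "contraction_cost x f Q < scale x * (real (tie_rank Q) + 1)"
    by (rule contraction_cost_bounds(2)[OF assms])
  also have "\<dots> \<le> scale x * (total_tie_weight + 1)"
    using tie_rank_le_total[of Q] scale_pos[of x] by (intro mult_left_mono) auto
  also have "\<dots> = surcharge x / 2"
    using total_tie_weight_nonneg by (simp add: scale_def field_simps)
  finally show ?thesis .
qed

lemma contraction_cost_rank_mono:
  assumes d: "distinct Q1" "distinct Q2" and f: "\<forall>a. 0 \<le> f a \<and> f a \<le> mass"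
    and le: "tie_rank Q1 \<le> tie_rank Q2"
  shows "contraction_cost x f Q1 \<le> contraction_cost x f Q2"
proof (cases "tie_rank Q1 = tie_rank Q2")
  case True
  then show ?thesis using tie_rank_eq[OF True] by (simp add: contraction_cost_eq[OF d(1)] contraction_cost_eq[OF d(2)])
next
  case False
  then have "real (tie_rank Q1) + 1 \<le> real (tie_rank Q2)" using le by linarith
  then have "contraction_cost x f Q1 < scale x * real (tie_rank Q2)"
    using contraction_cost_bounds(2)[OF d(1) f, of x] scale_pos[of x]
    by (smt (verit) mult_left_mono)
  also have "\<dots> \<le> contraction_cost x f Q2" by (rule contraction_cost_bounds(1)[OF d(2) f])
  finally show ?thesis by simp
qed

lemma exit_dominates:
  assumes x: "x \<in> pop" and f: "\<forall>a. 0 \<le> f a \<and> f a \<le> mass"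
    and Q: "distinct Q" "set Q \<subseteq> darcs E0"
    and P: "distinct P" "a \<in> set P" "a \<notin> darcs E0"
  shows "route_cost host_cost x f Q < route_cost host_cost x f P"
proof -
  have "route_cost host_cost x f Q = (\<Sum>b\<in>set Q. inner_cost x b (f b))"
    using Q by (auto simp: route_cost_distinct host_cost_def intro!: sum.cong)
  also have "\<dots> \<le> (\<Sum>b\<in>darcs E0. inner_cost x b (f b))"
    using Q(2) f inner_cost_nonneg[OF x] by (intro sum_mono2 finite_darcs finite_E0) auto
  also have "\<dots> \<le> (\<Sum>b\<in>darcs E0. inner_cost x b mass)"
    using f mass_nonneg by (intro sum_mono strict_mono_on_leD[OF inner_cost_strict_mono[OF x]]) auto
  also have "\<dots> < exit_cost x" by (simp add: exit_cost_def)
  also have "\<dots> \<le> host_cost x a (f a)" using P(3) spec[OF f, of a] by (simp add: host_cost_def)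
  also have "\<dots> \<le> (\<Sum>b\<in>set P. host_cost x b (f b))"
    using P(2) f host_cost_nonneg[OF x] by (intro member_le_sum) auto
  also have "\<dots> = route_cost host_cost x f P" using P(1) by (simp add: route_cost_distinct)
  finally show ?thesis .
qed


lemma lift_cost_rank_mono:
  assumes flows: "\<And>a. fst a \<in> E0 - C \<Longrightarrow> f a = g (arc_map a)" and f: "\<forall>a. 0 \<le> f a \<and> f a \<le> mass"
    and Q: "Q \<in> lifts l R" and P: "P \<in> lifts l R" and rank: "tie_rank Q \<le> tie_rank P"
  shows "route_cost host_cost x f Q \<le> route_cost host_cost x f P"
proof -
  from Q P have arcs: "set Q \<subseteq> darcs E0" "set P \<subseteq> darcs E0" and "proj Q = proj P"
    and "distinct Q" "distinct P"
    by (auto simp: lifts_def route_iff_walk distinct_map)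
  then have "contraction_cost x f Q \<le> contraction_cost x f P"
    using contraction_cost_rank_mono[OF _ _ f rank] by blast
  then show ?thesis
    using host_route_cost[where f = f and g = g, OF flows arcs(1)]
      host_route_cost[where f = f and g = g, OF flows arcs(2)] \<open>proj Q = proj P\<close>
    by simp
qed

text \<open>A route of M inside E0 whose projection is not the route R of the user in the minor
  costs more than any lift of R: its projection pays the deviation penalty, which exceeds
  the cost of all contracted arcs.\<close>
lemma deviating_route_cost:
  assumes \<sigma>: "\<sigma> \<in> {s1, s2}" and x: "x \<in> pop"
    and flows: "\<And>a. fst a \<in> E0 - C \<Longrightarrow> f a = flow pop \<sigma> (arc_map a)"
    and f: "\<forall>a. 0 \<le> f a \<and> f a \<le> mass"
    and Q: "Q \<in> lifts (host_odp x) (\<sigma> x)"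
    and P: "is_route M (host_odp x) P" "set P \<subseteq> darcs E0" and deviates: "proj P \<noteq> \<sigma> x"
  shows "route_cost host_cost x f Q < route_cost host_cost x f P"
proof -
  let ?g = "flow pop \<sigma>"
  obtain o' d where od: "host_odp x = (o', d)" by (cases "host_odp x")
  then have od_L0: "(o', d) \<in> L0" and odp: "odp' x = (\<phi> o', \<phi> d)" and P_od: "is_route M (o', d) P"
    using host_profile(1,2)[OF x \<sigma>] P(1) by auto
  obtain P' where "is_route M' (\<phi> o', \<phi> d) P'" "subseq P' (proj P)"
    using od_L0 P_od P(2) by (rule route_proj)
  then have "route_cost c' x ?g (\<sigma> x) + surcharge x * (length (\<sigma> x) + 1 / 2)
               \<le> route_cost c' x ?g (proj P) + surcharge x * length (proj P)"
    using deviation_penalty[OF \<sigma> x surcharge_pos surcharge_gap _ _ proj_arcs[OF P(2)] deviates] odp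
    by simp
  moreover from Q have Q_arcs: "set Q \<subseteq> darcs E0" and "proj Q = \<sigma> x" and "distinct Q"
    by (auto simp: lifts_def route_iff_walk distinct_map)
  then have "contraction_cost x f Q < surcharge x / 2" using contraction_cost_small f by blast
  moreover have "distinct P" using P(1) by (auto simp: route_iff_walk distinct_map)
  then have "0 \<le> contraction_cost x f P"
    using contraction_cost_bounds(1)[OF _ f, of P x] scale_pos[of x]
    by (smt (verit) mult_nonneg_nonneg of_nat_0_le_iff)
  ultimately show ?thesis
    using host_route_cost[where f = f and g = ?g, OF flows Q_arcs]
      host_route_cost[where f = f and g = ?g, OF flows P(2)] \<open>proj Q = \<sigma> x\<close>
    by (simp add: distrib_left)
qed

lemma host_profile_optimal:
  assumes \<sigma>: "\<sigma> \<in> {s1, s2}" and x: "x \<in> pop" and P: "is_route M (host_odp x) P"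
  shows "route_cost host_cost x (flow pop (host_profile \<sigma>)) (host_profile \<sigma> x)
           \<le> route_cost host_cost x (flow pop (host_profile \<sigma>)) P"
proof -
  let ?f = "flow pop (host_profile \<sigma>)" and ?Q = "host_profile \<sigma> x"
  have f: "\<forall>a. 0 \<le> ?f a \<and> ?f a \<le> mass" by (simp add: flow_bounds)
  have flows: "\<And>a. fst a \<in> E0 - C \<Longrightarrow> ?f a = flow pop \<sigma> (arc_map a)" using host_flow[OF \<sigma>] by simp
  have Q: "?Q \<in> lifts (host_odp x) (\<sigma> x)" using host_profile(3)[OF x \<sigma>] .
  then have "distinct ?Q" "set ?Q \<subseteq> darcs E0" by (auto simp: lifts_def route_iff_walk distinct_map)
  have "distinct P" using P by (auto simp: route_iff_walk distinct_map)
  consider (leaves) a where "a \<in> set P" "a \<notin> darcs E0" | (lift) "P \<in> lifts (host_odp x) (\<sigma> x)"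
    | (deviates) "set P \<subseteq> darcs E0" "proj P \<noteq> \<sigma> x"
    using P unfolding lifts_def by blast
  then show ?thesis
  proof cases
    case leaves
    then show ?thesis using exit_dominates[OF x f \<open>distinct ?Q\<close> \<open>set ?Q \<subseteq> _\<close> \<open>distinct P\<close>] by fastforce
  next
    case lift
    then show ?thesis using lift_cost_rank_mono[OF flows f Q] host_profile(4)[OF x \<sigma>] by blast
  next
    case deviates
    then show ?thesis using deviating_route_cost[OF \<sigma> x flows f Q P] by simp
  qed
qed

lemma host_admissible: "admissible M pop host_odp host_cost"
proof -
  have "host_odp x \<in> L" if "x \<in> pop" for x
    using host_profile(1)[OF that, of s1] L0_sub by auto
  moreover have "{x \<in> pop. host_odp x = l} \<in> sets lebesgue" for l
  proof -
    have "{x \<in> pop. host_odp x = l} = (\<Union>l'\<in>{l' \<in> L'. od_lift l' = l}. {x \<in> pop. odp' x = l'})"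
    proof (intro set_eqI iffI)
      fix x assume "x \<in> {x \<in> pop. host_odp x = l}"
      then show "x \<in> (\<Union>l'\<in>{l' \<in> L'. od_lift l' = l}. {x \<in> pop. odp' x = l'})"
        using user_route[of x s1] by (auto simp: host_odp_def)
    qed (auto simp: host_odp_def)
    moreover have "(\<Union>l'\<in>{l' \<in> L'. od_lift l' = l}. {x \<in> pop. odp' x = l'}) \<in> sets lebesgue"
      using finite_L' by (intro sets.finite_UN od_measurable) auto
    ultimately show ?thesis by simp
  qed
  ultimately show ?thesis unfolding admissible_def prod.case
    using host_cost_continuous host_cost_strict_mono host_cost_nonneg host_cost_measurable by auto
qed

lemma host_profile_is_profile:
  assumes \<sigma>: "\<sigma> \<in> {s1, s2}"
  shows "profile M pop host_odp (host_profile \<sigma>)"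
proof -
  have "{x \<in> pop. host_profile \<sigma> x = Q} \<in> sets lebesgue" for Q
  proof -
    text \<open>A user's lifted route depends only on his OD-pair and his route in the minor.\<close>
    define F where "F = {p \<in> L' \<times> short_arc_lists E'. canonical_lift (od_lift (fst p)) (snd p) = Q}"
    have "{x \<in> pop. host_profile \<sigma> x = Q} = (\<Union>p\<in>F. {x \<in> pop. odp' x = fst p} \<inter> {x \<in> pop. \<sigma> x = snd p})"
    proof (intro set_eqI iffI)
      fix x assume x: "x \<in> {x \<in> pop. host_profile \<sigma> x = Q}"
      then have "odp' x \<in> L'" "\<sigma> x \<in> short_arc_lists E'"
        using user_route[OF _ \<sigma>, of x] route_in_short_arc_lists[OF finite_E'] by blast+
      then have "(odp' x, \<sigma> x) \<in> F" using x by (simp add: F_def host_profile_def host_odp_def)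
      then show "x \<in> (\<Union>p\<in>F. {x \<in> pop. odp' x = fst p} \<inter> {x \<in> pop. \<sigma> x = snd p})"
        using x by force
    qed (auto simp: F_def host_profile_def host_odp_def)
    moreover have "finite F"
      using finite_subset[of F "L' \<times> short_arc_lists E'"] finite_L' finite_short_arc_lists[OF finite_E']
      by (auto simp: F_def)
    moreover have "{x \<in> pop. \<sigma> x = R} \<in> sets lebesgue" for R
      using strict_equilibria[OF \<sigma>] by (auto simp: strict_equilibrium_def profile_def)
    ultimately show ?thesis
      using od_measurable by (auto simp: F_def intro!: sets.finite_UN sets.Int)
  qed
  then show ?thesis using host_profile(3)[OF _ \<sigma>] by (auto simp: profile_def lifts_def)
qed

lemma host_equilibrium: "\<sigma> \<in> {s1, s2} \<Longrightarrow> equilibrium M pop host_odp host_cost (host_profile \<sigma>)"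
  unfolding equilibrium_def using host_profile_is_profile host_profile_optimal by blast

lemma not_uniqueness:
  assumes "a' \<in> darcs E'" and "flow pop s1 a' \<noteq> flow pop s2 a'"
  shows "\<not> uniqueness_property M pop"
proof -
  obtain a where a: "fst a \<in> E0 - C" "arc_map a = a'" using arc_map_surj[OF assms(1)] by blast
  then have "a \<in> darcs E" using E0_sub by auto
  moreover have "flow pop (host_profile s1) a \<noteq> flow pop (host_profile s2) a"
    using host_flow a assms(2) by simp
  ultimately show ?thesis
    using host_admissible host_equilibrium[of s1] host_equilibrium[of s2]
    unfolding uniqueness_property_def prod.case by blast
qed

end


theorem mainTheorem11:
  fixes M :: "('v,'e) mixed_graph" and M' :: "('w,'f) mixed_graph" and lo hi :: real
  assumes "well_formed_mg M" and "well_formed_mg M'"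
    and "is_minor M' M"
    and "\<exists>odp c \<sigma>1 \<sigma>2 a. admissible M' {lo..hi} odp c
           \<and> strict_equilibrium M' {lo..hi} odp c \<sigma>1 \<and> strict_equilibrium M' {lo..hi} odp c \<sigma>2
           \<and> a \<in> darcs (fst (snd M')) \<and> flow {lo..hi} \<sigma>1 a \<noteq> flow {lo..hi} \<sigma>2 a"
  shows "\<not> uniqueness_property M {lo..hi}"
proof -
  obtain V E ends L where M: "M = (V, E, ends, L)" by (cases M) auto
  obtain V' E' ends' L' where M': "M' = (V', E', ends', L')" by (cases M') auto
  from assms(4) obtain odp c \<sigma>1 \<sigma>2 a where game: "admissible M' {lo..hi} odp c"
    "strict_equilibrium M' {lo..hi} odp c \<sigma>1" "strict_equilibrium M' {lo..hi} odp c \<sigma>2"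
    "a \<in> darcs E'" "flow {lo..hi} \<sigma>1 a \<noteq> flow {lo..hi} \<sigma>2 a"
    unfolding M' by auto
  from assms(1-3) obtain V0 E0 L0 C \<phi> \<beta> where "minor_map E ends L V' E' ends' L' V0 E0 L0 C \<phi> \<beta>"
    unfolding M M' by (rule is_minor_minor_map)
  then interpret lifted_game E ends L V' E' ends' L' V0 E0 L0 C \<phi> \<beta> V lo hi odp c \<sigma>1 \<sigma>2
    using game unfolding M' by (simp add: lifted_game_def lifted_game_axioms_def)
  show ?thesis using not_uniqueness[OF game(4,5)] unfolding M .
qed

end
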